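(* Let $\tilde{Q}$ be a finite connected quandle and $p:\tilde{Q}\to Q$ a covering. If $\Lambda$ is a subgroup of $\mathrm{Aut}(p)$ which acts transitively on each fiber of $p$, then $\Lambda=\mathrm{Aut}(p)$ and each fiber has cardinality $|\Lambda|$.
   Context: A quandle is a set with operation $*$ satisfying $a*a=a$; unique right division; $(a*b)*c=(a*c)*(b*c)$. $R_a(y)=y*a$; connected means the group generated by the $R_a$ acts transitively. A covering is a quandle epimorphism $p:\tilde Q\to Q$ with $p(y_1)=p(y_2)\Rightarrow R_{y_1}=R_{y_2}$; $\mathrm{Aut}(p)$ is the group of automorphisms $\lambda$ of $\tilde Q$ with $p\circ\lambda=p$. *)

theory Defs
  imports Main
begin

text \<open>A quandle with carrier A and operation op (op y a = y * a).\<close>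
definition quandle :: "'a set \<Rightarrow> ('a \<Rightarrow> 'a \<Rightarrow> 'a) \<Rightarrow> bool" where
  "quandle A op \<longleftrightarrow>
     (\<forall>a\<in>A. \<forall>b\<in>A. op a b \<in> A) \<and>
     (\<forall>a\<in>A. op a a = a) \<and>
     (\<forall>a\<in>A. \<forall>b\<in>A. \<exists>!x. x \<in> A \<and> op x a = b) \<and>
     (\<forall>a\<in>A. \<forall>b\<in>A. \<forall>c\<in>A. op (op a b) c = op (op a c) (op b c))"

text \<open>Orbit of x under the group generated by the right translations R_a (y maps to op y a)
  and their inverses.\<close>
inductive_set inner_orbit :: "'a set \<Rightarrow> ('a \<Rightarrow> 'a \<Rightarrow> 'a) \<Rightarrow> 'a \<Rightarrow> 'a set"
  for A op x where
  base: "x \<in> A \<Longrightarrow> x \<in> inner_orbit A op x"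
| right: "y \<in> inner_orbit A op x \<Longrightarrow> a \<in> A \<Longrightarrow> op y a \<in> inner_orbit A op x"
| right_inv: "y \<in> inner_orbit A op x \<Longrightarrow> a \<in> A \<Longrightarrow> z \<in> A \<Longrightarrow> op z a = y
               \<Longrightarrow> z \<in> inner_orbit A op x"

definition connected_quandle :: "'a set \<Rightarrow> ('a \<Rightarrow> 'a \<Rightarrow> 'a) \<Rightarrow> bool" where
  "connected_quandle A op \<longleftrightarrow> quandle A op \<and> (\<forall>x\<in>A. \<forall>y\<in>A. y \<in> inner_orbit A op x)"

definition quandle_hom ::
  "'a set \<Rightarrow> ('a \<Rightarrow> 'a \<Rightarrow> 'a) \<Rightarrow> 'b set \<Rightarrow> ('b \<Rightarrow> 'b \<Rightarrow> 'b) \<Rightarrow> ('a \<Rightarrow> 'b) \<Rightarrow> bool" where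
  "quandle_hom A opA B opB f \<longleftrightarrow>
     (\<forall>x\<in>A. f x \<in> B) \<and> (\<forall>x\<in>A. \<forall>y\<in>A. f (opA x y) = opB (f x) (f y))"

definition covering ::
  "'a set \<Rightarrow> ('a \<Rightarrow> 'a \<Rightarrow> 'a) \<Rightarrow> 'b set \<Rightarrow> ('b \<Rightarrow> 'b \<Rightarrow> 'b) \<Rightarrow> ('a \<Rightarrow> 'b) \<Rightarrow> bool" where
  "covering A opA B opB p \<longleftrightarrow>
     quandle A opA \<and> quandle B opB \<and> quandle_hom A opA B opB p \<and> p ` A = B \<and>
     (\<forall>y1\<in>A. \<forall>y2\<in>A. p y1 = p y2 \<longrightarrow> (\<forall>x\<in>A. opA x y1 = opA x y2))"

definition cov_aut :: "'a set \<Rightarrow> ('a \<Rightarrow> 'a \<Rightarrow> 'a) \<Rightarrow> ('a \<Rightarrow> 'b) \<Rightarrow> ('a \<Rightarrow> 'a) set" where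
  "cov_aut A opA p = {f. bij_betw f A A \<and> quandle_hom A opA A opA f \<and>
       (\<forall>x\<in>A. p (f x) = p x) \<and> (\<forall>x. x \<notin> A \<longrightarrow> f x = x)}"

definition restr_inv :: "'a set \<Rightarrow> ('a \<Rightarrow> 'a) \<Rightarrow> ('a \<Rightarrow> 'a)" where
  "restr_inv A f = (\<lambda>x. if x \<in> A then inv_into A f x else x)"

definition subgroup_of_aut ::
  "('a \<Rightarrow> 'a) set \<Rightarrow> 'a set \<Rightarrow> ('a \<Rightarrow> 'a \<Rightarrow> 'a) \<Rightarrow> ('a \<Rightarrow> 'b) \<Rightarrow> bool" where
  "subgroup_of_aut L A opA p \<longleftrightarrow> L \<subseteq> cov_aut A opA p \<and> id \<in> L \<and>
     (\<forall>f\<in>L. \<forall>g\<in>L. f \<circ> g \<in> L) \<and> (\<forall>f\<in>L. restr_inv A f \<in> L)"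

end

theory Submission
  imports Defs
begin

text \<open>Two automorphisms of a covering agree on the right translations by any point, since
  \<open>f a\<close> and \<open>g a\<close> lie in the same fiber. Hence the set where they agree is closed under
  all \<open>R_a\<close> and their inverses; by connectedness it is everything as soon as it is nonempty.
  So evaluation at a point \<open>x\<^sub>0\<close> is injective on \<open>Aut(p)\<close>, and if \<open>\<Lambda>\<close> is transitive on
  the fiber of \<open>x\<^sub>0\<close> it maps \<open>\<Lambda>\<close> onto that fiber; both claims follow.\<close>

lemma quandle_closed:
  assumes "quandle A op" and "a \<in> A" and "b \<in> A"
  shows "op a b \<in> A"
  using assms(1)[unfolded quandle_def, THEN conjunct1] assms(2,3) by blast

lemma quandle_right_cancel:
  assumes q: "quandle A op" and a: "a \<in> A" and x: "x \<in> A" and y: "y \<in> A"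
    and eq: "op x a = op y a"
  shows "x = y"
proof -
  have "\<forall>a\<in>A. \<forall>b\<in>A. \<exists>!z. z \<in> A \<and> op z a = b"
    using q[unfolded quandle_def, THEN conjunct2, THEN conjunct2, THEN conjunct1] .
  then have "\<exists>!z. z \<in> A \<and> op z a = op x a"
    using a quandle_closed[OF q x a] by simp
  then show ?thesis using x y eq by (metis (mono_tags))
qed

lemma covering_fiber_translation:
  assumes "covering A opA B opB p" and "y1 \<in> A" and "y2 \<in> A" and "p y1 = p y2" and "x \<in> A"
  shows "opA x y1 = opA x y2"
  using assms unfolding covering_def by blast

lemma connected_quandleD:
  assumes "connected_quandle A op"
  shows "quandle A op" and "\<And>x y. x \<in> A \<Longrightarrow> y \<in> A \<Longrightarrow> y \<in> inner_orbit A op x"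
  using assms unfolding connected_quandle_def by blast+

lemma covering_onto:
  assumes "covering A opA B opB p" and "b \<in> B"
  obtains x where "x \<in> A" and "p x = b"
  using assms unfolding covering_def by blast

lemma cov_autD:
  assumes "f \<in> cov_aut A opA p"
  shows "\<And>x. x \<in> A \<Longrightarrow> f x \<in> A"
    and "\<And>x y. x \<in> A \<Longrightarrow> y \<in> A \<Longrightarrow> f (opA x y) = opA (f x) (f y)"
    and "\<And>x. x \<in> A \<Longrightarrow> p (f x) = p x"
    and "\<And>x. x \<notin> A \<Longrightarrow> f x = x"
  using assms unfolding cov_aut_def quandle_hom_def by blast+

lemma cov_aut_agree_on_inner_orbit:
  assumes q: "quandle A opA"
    and cov: "covering A opA B opB p"
    and f: "f \<in> cov_aut A opA p" and g: "g \<in> cov_aut A opA p"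
    and agree: "f x0 = g x0"
    and y: "y \<in> inner_orbit A opA x0"
  shows "f y = g y"
proof -
  have same_translation: "opA y (f a) = opA y (g a)" if "a \<in> A" "y \<in> A" for a y
    using cov_autD(1,3)[OF f] cov_autD(1,3)[OF g] that
    by (intro covering_fiber_translation[OF cov]) simp_all
  from y have "y \<in> A \<and> f y = g y"
  proof (induction rule: inner_orbit.induct)
    case base
    then show ?case using agree by simp
  next
    case (right y a)
    then have "f (opA y a) = opA (g y) (g a)"
      using cov_autD(2)[OF f] cov_autD(1)[OF g] same_translation by simp
    then show ?case using right cov_autD(2)[OF g] quandle_closed[OF q] by simp
  next
    case (right_inv y a z)
    have fz: "f z \<in> A" and gz: "g z \<in> A" and fa: "f a \<in> A"
      using right_inv.hyps cov_autD(1)[OF f] cov_autD(1)[OF g] by auto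
    have "opA (f z) (f a) = opA (g z) (f a)"
      using right_inv cov_autD(2)[OF f] cov_autD(2)[OF g] same_translation[OF _ gz] by auto
    then have "f z = g z"
      using quandle_right_cancel[OF q fa fz gz] by blast
    then show ?case using right_inv.hyps by simp
  qed
  then show ?thesis by simp
qed

lemma cov_aut_eqI:
  assumes conn: "connected_quandle A opA" and cov: "covering A opA B opB p"
    and f: "f \<in> cov_aut A opA p" and g: "g \<in> cov_aut A opA p"
    and x0: "x0 \<in> A" and agree: "f x0 = g x0"
  shows "f = g"
proof
  fix y
  show "f y = g y"
  proof (cases "y \<in> A")
    case True
    then have "y \<in> inner_orbit A opA x0" by (rule connected_quandleD(2)[OF conn x0])
    then show ?thesis
      by (rule cov_aut_agree_on_inner_orbit[OF connected_quandleD(1)[OF conn] cov f g agree])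
  qed (simp add: cov_autD(4)[OF f] cov_autD(4)[OF g])
qed

lemma bij_betw_eval_fiber:
  assumes conn: "connected_quandle A opA" and cov: "covering A opA B opB p"
    and L: "L \<subseteq> cov_aut A opA p"
    and trans: "\<forall>x\<in>A. \<forall>y\<in>A. p x = p y \<longrightarrow> (\<exists>f\<in>L. f x = y)"
    and x0: "x0 \<in> A"
  shows "bij_betw (\<lambda>f. f x0) L {x\<in>A. p x = p x0}"
proof (rule bij_betw_imageI)
  show "inj_on (\<lambda>f. f x0) L"
  proof (rule inj_onI)
    fix f g assume "f \<in> L" "g \<in> L" "f x0 = g x0"
    with L show "f = g" using cov_aut_eqI[OF conn cov _ _ x0] by blast
  qed
  show "(\<lambda>f. f x0) ` L = {x\<in>A. p x = p x0}"
  proof (intro equalityI subsetI)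
    fix y assume "y \<in> (\<lambda>f. f x0) ` L"
    then obtain f where f: "f \<in> cov_aut A opA p" and y: "y = f x0" using L by blast
    show "y \<in> {x\<in>A. p x = p x0}" using cov_autD(1,3)[OF f x0] y by simp
  next
    fix y assume "y \<in> {x\<in>A. p x = p x0}"
    then have "y \<in> A" "p x0 = p y" by simp_all
    then obtain f where "f \<in> L" "f x0 = y" using trans x0 by blast
    then show "y \<in> (\<lambda>f. f x0) ` L" by blast
  qed
qed

lemma cov_aut_subset_transitive_subgroup:
  assumes conn: "connected_quandle A opA" and cov: "covering A opA B opB p"
    and L: "L \<subseteq> cov_aut A opA p" and id: "id \<in> L"
    and trans: "\<forall>x\<in>A. \<forall>y\<in>A. p x = p y \<longrightarrow> (\<exists>f\<in>L. f x = y)"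
  shows "cov_aut A opA p \<subseteq> L"
proof
  fix g assume g: "g \<in> cov_aut A opA p"
  show "g \<in> L"
  proof (cases "A = {}")
    case True
    then have "g = id" using cov_autD(4)[OF g] by auto
    then show ?thesis using id by simp
  next
    case False
    then obtain x0 where x0: "x0 \<in> A" by blast
    have "g x0 \<in> A" "p x0 = p (g x0)" using cov_autD(1,3)[OF g x0] by simp_all
    then obtain f where f: "f \<in> L" "f x0 = g x0" using trans x0 by blast
    then have "f = g" using cov_aut_eqI[OF conn cov _ g x0] L by blast
    then show ?thesis using f by simp
  qed
qed

theorem mainTheorem13:
  fixes A :: "'a set" and opA :: "'a \<Rightarrow> 'a \<Rightarrow> 'a"
    and B :: "'b set" and opB :: "'b \<Rightarrow> 'b \<Rightarrow> 'b"
    and p :: "'a \<Rightarrow> 'b" and L :: "('a \<Rightarrow> 'a) set"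
  assumes "finite A"
    and "connected_quandle A opA"
    and "covering A opA B opB p"
    and "subgroup_of_aut L A opA p"
    and "\<forall>x\<in>A. \<forall>y\<in>A. p x = p y \<longrightarrow> (\<exists>f\<in>L. f x = y)"
  shows "L = cov_aut A opA p \<and> (\<forall>b\<in>B. card {x\<in>A. p x = b} = card L)"
proof
  have L: "L \<subseteq> cov_aut A opA p" and id: "id \<in> L"
    using assms(4) unfolding subgroup_of_aut_def by simp_all
  show "L = cov_aut A opA p"
    using L cov_aut_subset_transitive_subgroup[OF assms(2,3) L id assms(5)] by (rule equalityI)
  show "\<forall>b\<in>B. card {x\<in>A. p x = b} = card L"
  proof
    fix b assume "b \<in> B"
    then obtain x0 where x0: "x0 \<in> A" and b: "b = p x0"
      using covering_onto[OF assms(3)] by metis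
    show "card {x\<in>A. p x = b} = card L"
      using bij_betw_same_card[OF bij_betw_eval_fiber[OF assms(2,3) L assms(5) x0]] b by simp
  qed
qed

end
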